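(* Let $n\le k$ be positive integers and let $\mathcal{A},\mathcal{B}$ be $I$-structures. There is a homomorphism $f:\mathbb{H}_{n,k}\mathcal{A}\to\mathcal{B}$ if and only if Duplicator has a winning strategy in the game $+\mathrm{Fun}^{k}_{n}(\mathcal{A},\mathcal{B})$.
   Context: Structures are over a finite relational signature $\sigma\cup\{I\}$ with $I$ binary; an $I$-structure is one interpreting $I$ as the identity relation. For $m\in\mathbb{N}$, $[m]=\{1,\dots,m\}$. For a structure $\mathcal{A}$, $\mathbb{T}_k\mathcal{A}$ has universe the nonempty finite lists over $A\times[k]$; $\epsilon_{\mathcal{A}}(s)$ is the first component of the last pair of $s$; a tuple $(s_1,\dots,s_r)$ is in a relation $R^{\mathbb{T}_k\mathcal{A}}$ iff the $s_i$ are pairwise prefix-comparable, $(\epsilon_{\mathcal{A}}(s_1),\dots,\epsilon_{\mathcal{A}}(s_r))\in R^{\mathcal{A}}$, and whenever $s_i$ is a prefix of $s_j$ ending with $(a,p)$, no prefix of $s_j$ properly extending $s_i$ ends with a pair $(a',p)$. A list over $A\times[k]$ is basic if it has at most $n$ pairs with distinct pebble indices; $S_n(s)=[s]$ if $s$ is basic, else $S_n(s)=[a];S_n(t)$ with $s=a\cdot t$ and $a$ the longest basic prefix. For $p\in[k]$ and $S_n(s)=t;[s']$ ($s'$ the last block), $\alpha_n(s,p)=t;[s']$ if $|s'|=n$ or $p$ occurs in $s'$, else $t$. $[s;(a,i)]\approx_n[t;(b,j)]$ iff $a=b$ and $\alpha_n(s,i)=\alpha_n(t,j)$. $\mathbb{H}_{n,k}\mathcal{A}=\mathbb{T}_k\mathcal{A}/{\approx_n}$,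 where a tuple of classes is in a relation iff some choice of representatives is in it in $\mathbb{T}_k\mathcal{A}$. The game $+\mathrm{Fun}^{k}_{n}(\mathcal{A},\mathcal{B})$: positions are partial maps $\pi^a:[k]\rightharpoonup A$, $\pi^b:[k]\rightharpoonup B$, initially empty. Each round Duplicator provides a function $h:A\to B$ with $h(\pi^a(i))=\pi^b(i)$ for all $i$ in the domain of $\pi^a$; Spoiler picks $m\le n$ distinct indices $p_1,\dots,p_m\in[k]$ and elements $a_1,\dots,a_m\in A$; the position is updated by $\pi^a(p_l)=a_l$, $\pi^b(p_l)=h(a_l)$, other values unchanged. Spoiler wins if for some relation symbol $R$ of arity $r$ and indices $i_1,\dots,i_r$, $(\pi^a(i_1),\dots,\pi^a(i_r))\in R^{\mathcal{A}}$ but $(\pi^b(i_1),\dots,\pi^b(i_r))\notin R^{\mathcal{B}}$. Duplicator wins by playing forever without Spoiler winning. *)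

theory Defs
  imports Main "HOL-Library.Sublist"
begin

text \<open>A structure over a relational signature with symbol type 'r (finite type
 = finite signature) and arity function ar: a universe together with an
 interpretation of each relation symbol as a set of tuples (lists).\<close>

type_synonym ('r,'a) struc = "'a set \<times> ('r \<Rightarrow> 'a list set)"

abbreviation univ :: "('r,'a) struc \<Rightarrow> 'a set" where "univ M \<equiv> fst M"
abbreviation rel :: "('r,'a) struc \<Rightarrow> 'r \<Rightarrow> 'a list set" where "rel M \<equiv> snd M"

definition wf_struc :: "('r \<Rightarrow> nat) \<Rightarrow> ('r,'a) struc \<Rightarrow> bool" where
  "wf_struc ar M \<longleftrightarrow> (\<forall>R. \<forall>t \<in> rel M R. length t = ar R \<and> set t \<subseteq> univ M)"

definition I_struc :: "'r \<Rightarrow> ('r,'a) struc \<Rightarrow> bool" where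
  "I_struc I M \<longleftrightarrow> rel M I = {[a, a] | a. a \<in> univ M}"

definition is_hom :: "('r,'a) struc \<Rightarrow> ('r,'b) struc \<Rightarrow> ('a \<Rightarrow> 'b) \<Rightarrow> bool" where
  "is_hom M N f \<longleftrightarrow> (\<forall>x \<in> univ M. f x \<in> univ N) \<and> (\<forall>R. \<forall>t \<in> rel M R. map f t \<in> rel N R)"

definition eps :: "('a \<times> nat) list \<Rightarrow> 'a" where
  "eps s = fst (last s)"

definition T_univ :: "nat \<Rightarrow> ('r,'a) struc \<Rightarrow> ('a \<times> nat) list set" where
  "T_univ k A = {s. s \<noteq> [] \<and> set s \<subseteq> univ A \<times> {1..k}}"

definition T_rel :: "nat \<Rightarrow> ('r,'a) struc \<Rightarrow> 'r \<Rightarrow> ('a \<times> nat) list list set" where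
  "T_rel k A R = {ss. set ss \<subseteq> T_univ k A
      \<and> (\<forall>s\<in>set ss. \<forall>t\<in>set ss. prefix s t \<or> prefix t s)
      \<and> map eps ss \<in> rel A R
      \<and> (\<forall>s\<in>set ss. \<forall>t\<in>set ss. prefix s t \<longrightarrow>
            (\<forall>u. prefix u t \<and> strict_prefix s u \<longrightarrow> snd (last u) \<noteq> snd (last s)))}"

definition T_struc :: "nat \<Rightarrow> ('r,'a) struc \<Rightarrow> ('r, ('a \<times> nat) list) struc" where
  "T_struc k A = (T_univ k A, T_rel k A)"

definition basic :: "nat \<Rightarrow> ('a \<times> nat) list \<Rightarrow> bool" where
  "basic n s \<longleftrightarrow> length s \<le> n \<and> distinct (map snd s)"

definition lbp :: "nat \<Rightarrow> ('a \<times> nat) list \<Rightarrow> nat" where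
  "lbp n s = (GREATEST i. i \<le> length s \<and> basic n (take i s))"

lemma basic_Nil: "basic n []" by (simp add: basic_def)

text \<open>S_n; the guard lbp = 0 only matters for n = 0 (for n >= 1 every nonempty
 list has a nonempty basic prefix).\<close>
function blocks :: "nat \<Rightarrow> ('a \<times> nat) list \<Rightarrow> ('a \<times> nat) list list" where
  "blocks n s = (if basic n s \<or> lbp n s = 0 then [s]
                 else take (lbp n s) s # blocks n (drop (lbp n s) s))"
  by auto
termination
  apply (relation "measure (\<lambda>(n, s). length s)")
   apply auto
  apply (case_tac s)
   apply (auto simp: basic_Nil)
  done

definition alpha :: "nat \<Rightarrow> ('a \<times> nat) list \<Rightarrow> nat \<Rightarrow> ('a \<times> nat) list list" where
  "alpha n s p = (let S = blocks n s; s' = last S in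
      if length s' = n \<or> p \<in> snd ` set s' then S else butlast S)"

definition approx :: "nat \<Rightarrow> ('a \<times> nat) list \<Rightarrow> ('a \<times> nat) list \<Rightarrow> bool" where
  "approx n s t \<longleftrightarrow> fst (last s) = fst (last t)
      \<and> alpha n (butlast s) (snd (last s)) = alpha n (butlast t) (snd (last t))"

definition approx_rel :: "nat \<Rightarrow> nat \<Rightarrow> ('r,'a) struc \<Rightarrow> (('a \<times> nat) list \<times> ('a \<times> nat) list) set" where
  "approx_rel n k A = {(s, t). s \<in> T_univ k A \<and> t \<in> T_univ k A \<and> approx n s t}"

definition H_univ :: "nat \<Rightarrow> nat \<Rightarrow> ('r,'a) struc \<Rightarrow> ('a \<times> nat) list set set" where
  "H_univ n k A = T_univ k A // approx_rel n k A"

definition H_rel :: "nat \<Rightarrow> nat \<Rightarrow> ('r,'a) struc \<Rightarrow> 'r \<Rightarrow> ('a \<times> nat) list set list set" where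
  "H_rel n k A R = {cs. set cs \<subseteq> H_univ n k A \<and>
      (\<exists>ss \<in> T_rel k A R. list_all2 (\<in>) ss cs)}"

definition H_struc :: "nat \<Rightarrow> nat \<Rightarrow> ('r,'a) struc \<Rightarrow> ('r, ('a \<times> nat) list set) struc" where
  "H_struc n k A = (H_univ n k A, H_rel n k A)"

definition valid_move :: "nat \<Rightarrow> nat \<Rightarrow> ('r,'a) struc \<Rightarrow> (nat \<times> 'a) list \<Rightarrow> bool" where
  "valid_move n k A m \<longleftrightarrow> length m \<le> n \<and> distinct (map fst m) \<and> set m \<subseteq> {1..k} \<times> univ A"

type_synonym ('a,'b) pos = "(nat \<rightharpoonup> 'a) \<times> (nat \<rightharpoonup> 'b)"

definition upd :: "('a \<Rightarrow> 'b) \<Rightarrow> ('a,'b) pos \<Rightarrow> (nat \<times> 'a) list \<Rightarrow> ('a,'b) pos" where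
  "upd h pos m = fold (\<lambda>(p, a) (x, y). (x(p \<mapsto> a), y(p \<mapsto> h a))) m pos"

text \<open>Duplicator strategies: functions from the history of Spoiler moves to h.\<close>
fun play :: "((nat \<times> 'a) list list \<Rightarrow> 'a \<Rightarrow> 'b) \<Rightarrow> (nat \<times> 'a) list list \<Rightarrow> ('a,'b) pos
              \<Rightarrow> (nat \<times> 'a) list list \<Rightarrow> ('a,'b) pos" where
  "play S hist pos [] = pos"
| "play S hist pos (m # ms) = play S (hist @ [m]) (upd (S hist) pos m) ms"

definition run :: "((nat \<times> 'a) list list \<Rightarrow> 'a \<Rightarrow> 'b) \<Rightarrow> (nat \<times> 'a) list list \<Rightarrow> ('a,'b) pos" where
  "run S ms = play S [] (Map.empty, Map.empty) ms"

definition spoiler_wins :: "('r,'a) struc \<Rightarrow> ('r,'b) struc \<Rightarrow> ('a,'b) pos \<Rightarrow> bool" where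
  "spoiler_wins A B pos \<longleftrightarrow> (\<exists>R is. set is \<subseteq> dom (fst pos) \<inter> dom (snd pos)
      \<and> map (the \<circ> fst pos) is \<in> rel A R \<and> map (the \<circ> snd pos) is \<notin> rel B R)"

definition dup_legal :: "('r,'a) struc \<Rightarrow> ('r,'b) struc \<Rightarrow> ('a,'b) pos \<Rightarrow> ('a \<Rightarrow> 'b) \<Rightarrow> bool" where
  "dup_legal A B pos h \<longleftrightarrow> (\<forall>x \<in> univ A. h x \<in> univ B)
      \<and> (\<forall>i \<in> dom (fst pos). fst pos i \<noteq> None \<and> Some (h (the (fst pos i))) = snd pos i)"

definition winning_strategy :: "nat \<Rightarrow> nat \<Rightarrow> ('r,'a) struc \<Rightarrow> ('r,'b) struc
      \<Rightarrow> ((nat \<times> 'a) list list \<Rightarrow> 'a \<Rightarrow> 'b) \<Rightarrow> bool" where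
  "winning_strategy n k A B S \<longleftrightarrow> (\<forall>ms. (\<forall>m \<in> set ms. valid_move n k A m) \<longrightarrow>
      dup_legal A B (run S ms) (S ms) \<and> \<not> spoiler_wins A B (run S ms))"

definition duplicator_wins :: "nat \<Rightarrow> nat \<Rightarrow> ('r,'a) struc \<Rightarrow> ('r,'b) struc \<Rightarrow> bool" where
  "duplicator_wins n k A B \<longleftrightarrow> (\<exists>S. winning_strategy n k A B S)"

end

(*
  Game to homomorphism: a list s = s' @ [(a, p)] of T_k A is sent to Duplicator's answer at a
  after Spoiler has played the blocks of alpha_n s' p as moves; this respects the relation
  approx n by construction. A related tuple of T_k A consists of prefixes of its longest
  member W, and each member ends with the last placement of its pebble within W. Hence one
  play, in which Spoiler plays the blocks of S_n W, puts all members on the board at once, and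
  since Duplicator does not lose, the image of the tuple is related in B.

  Homomorphism to game: Duplicator records the history W of all placements and answers a
  with f [C @ [(a, 1)]], where C is W with its last block sealed: pebbles not used in the
  block are put back where they already lie until the block is full or uses every pebble.
  After a sealed history every pebble placed in the next round gets the class of
  C @ [(a, 1)]. The identity relation I forces f [s] = f [t] whenever t extends s, ends
  at the same element and does not move the pebble of s again. So each pebble always carries
  the f-image of the prefix where it was last placed, and Spoiler can never win. With a single
  pebble (k = 1) Duplicator simply answers a with f [[(a, 1)]].
*)

theory Submission
  imports Defs
begin

declare blocks.simps[simp del]

section \<open>Greedy block decompositions\<close>

lemma basic_prefix: "basic n s \<Longrightarrow> prefix t s \<Longrightarrow> basic n t"
  by (auto simp: basic_def prefix_def)

lemma basic_snoc_iff: "basic n y \<Longrightarrow> basic n (y @ [(a, p)]) \<longleftrightarrow> length y < n \<and> p \<notin> snd ` set y"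
  by (auto simp: basic_def)

fun greedy :: "nat \<Rightarrow> ('a \<times> nat) list list \<Rightarrow> bool" where
  "greedy n [] = True"
| "greedy n [y] = (y \<noteq> [] \<and> basic n y)"
| "greedy n (y # z # T) = (y \<noteq> [] \<and> basic n y \<and> \<not> basic n (y @ [hd z]) \<and> greedy n (z # T))"

lemma greedy_Cons: "greedy n (y # T) \<longleftrightarrow> y \<noteq> [] \<and> basic n y \<and> greedy n T \<and>
   (T \<noteq> [] \<longrightarrow> \<not> basic n (y @ [hd (hd T)]))"
  by (cases T) auto

lemma greedy_append: "greedy n (T @ U) \<longleftrightarrow> greedy n T \<and> greedy n U \<and>
   (T \<noteq> [] \<and> U \<noteq> [] \<longrightarrow> \<not> basic n (last T @ [hd (hd U)]))"
  by (induction T) (auto simp: greedy_Cons)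

lemma greedy_blockD: "greedy n T \<Longrightarrow> b \<in> set T \<Longrightarrow> b \<noteq> [] \<and> basic n b"
  by (induction T) (auto simp: greedy_Cons)

lemma lbp_basic:
  assumes "0 < n" "s \<noteq> []"
  shows "0 < lbp n s" "lbp n s \<le> length s" "basic n (take (lbp n s) s)"
proof -
  let ?P = "\<lambda>i. i \<le> length s \<and> basic n (take i s)"
  have P1: "?P 1" using assms by (cases s) (auto simp: basic_def)
  have bound: "\<And>i. ?P i \<Longrightarrow> i \<le> length s" by simp
  have "?P (lbp n s)"
    unfolding lbp_def by (rule GreatestI_nat[where P = ?P, OF P1 bound])
  moreover have "1 \<le> lbp n s"
    unfolding lbp_def by (rule Greatest_le_nat[where P = ?P, OF P1 bound])
  ultimately
  show "0 < lbp n s" "lbp n s \<le> length s" "basic n (take (lbp n s) s)" by auto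
qed

lemma lbp_maximal: "lbp n s < i \<Longrightarrow> i \<le> length s \<Longrightarrow> \<not> basic n (take i s)"
  unfolding lbp_def using Greatest_le_nat[of "\<lambda>i. i \<le> length s \<and> basic n (take i s)" i]
  by fastforce

lemma concat_blocks: "concat (blocks n s) = s"
  by (induction n s rule: blocks.induct) (subst blocks.simps, simp)

lemma blocks_not_Nil: "blocks n s \<noteq> []"
  by (subst blocks.simps) simp

lemma blocks_Nil: "blocks n [] = [[]]"
  by (subst blocks.simps) (simp add: basic_def)

lemma greedy_blocks: "0 < n \<Longrightarrow> s \<noteq> [] \<Longrightarrow> greedy n (blocks n s)"
proof (induction n s rule: blocks.induct)
  case (1 n s)
  then have "s \<noteq> []" by simp
  let ?l = "lbp n s"
  show ?case
  proof (cases "basic n s")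
    case True
    then show ?thesis using 1 by (subst blocks.simps) simp
  next
    case False
    have l: "0 < ?l" "?l < length s" "basic n (take ?l s)"
      using lbp_basic[OF "1.prems"] False le_neq_implies_less by fastforce+
    then have IH: "greedy n (blocks n (drop ?l s))"
      using "1.IH" "1.prems"(1) False by simp
    have "hd (hd (blocks n (drop ?l s))) = s ! ?l"
      using IH l blocks_not_Nil concat_blocks
      by (metis greedy_blockD hd_concat hd_drop_conv_nth list.set_sel(1))
    moreover have "\<not> basic n (take ?l s @ [s ! ?l])"
      using lbp_maximal[of n s "Suc ?l"] l by (simp add: take_Suc_conv_app_nth)
    moreover have "blocks n s = take ?l s # blocks n (drop ?l s)"
      using False l by (subst blocks.simps) simp
    ultimately show ?thesis using IH l \<open>s \<noteq> []\<close> blocks_not_Nil by (simp add: greedy_Cons)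
  qed
qed

lemma greedy_concat_not_Nil: "greedy n T \<Longrightarrow> T \<noteq> [] \<Longrightarrow> concat T \<noteq> []"
  by (cases T) (auto simp: greedy_Cons)

lemma greedy_first_block_le:
  assumes "greedy n (y # T)" "greedy n (y' # T')" "concat (y # T) = concat (y' # T')"
  shows "length y' \<le> length y"
proof (rule ccontr)
  assume less: "\<not> length y' \<le> length y"
  have "T \<noteq> []"
    using less arg_cong[OF assms(3), of length] by (cases T) auto
  then obtain z T0 where T: "T = z # T0" by (cases T) auto
  have "z \<noteq> []" "\<not> basic n (y @ [hd z])"
    using assms(1) T by (auto simp: greedy_Cons)
  then have "prefix (y @ [hd z]) (concat (y' # T'))"
    using assms(3) T by (metis append_Cons append_Nil append_assoc concat.simps(2) list.collapse prefixI)
  moreover have "prefix y' (concat (y' # T'))" by simp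
  ultimately have "prefix (y @ [hd z]) y'"
    using less prefix_length_prefix by fastforce
  then show False
    using assms(2) \<open>\<not> basic n (y @ [hd z])\<close> basic_prefix by (auto simp: greedy_Cons)
qed

lemma greedy_unique: "greedy n T \<Longrightarrow> greedy n T' \<Longrightarrow> concat T = concat T' \<Longrightarrow> T = T'"
proof (induction T arbitrary: T')
  case Nil
  then show ?case using greedy_concat_not_Nil by fastforce
next
  case (Cons y T)
  then obtain y' T0' where T': "T' = y' # T0'"
    using greedy_concat_not_Nil by (cases T') fastforce+
  have "length y = length y'"
    using greedy_first_block_le Cons.prems T' by (metis le_antisym)
  moreover have "prefix y (concat T')" "prefix y' (concat T')"
    using Cons.prems(3) T' by (metis concat.simps(2) prefixI)+
  ultimately have "y = y'" by (metis prefix_length_prefix prefix_order.antisym order_refl)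
  then show ?case using Cons T' by (auto simp: greedy_Cons)
qed

lemma blocks_concat: "0 < n \<Longrightarrow> greedy n T \<Longrightarrow> T \<noteq> [] \<Longrightarrow> blocks n (concat T) = T"
  using greedy_blocks greedy_unique greedy_concat_not_Nil concat_blocks by metis

lemma basic_blocks:
  assumes "0 < n" "b \<in> set (blocks n s)"
  shows "basic n b"
proof (cases "s = []")
  case True
  then show ?thesis using assms(2) by (simp add: blocks_Nil basic_def)
next
  case False
  then show ?thesis using assms greedy_blockD greedy_blocks by blast
qed

lemma last_blocks_not_Nil: "0 < n \<Longrightarrow> s \<noteq> [] \<Longrightarrow> last (blocks n s) \<noteq> []"
  using greedy_blockD[OF greedy_blocks] blocks_not_Nil last_in_set by blast

lemma blocks_butlast_last: "blocks n s = butlast (blocks n s) @ [last (blocks n s)]"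
  by (rule append_butlast_last_id[symmetric, OF blocks_not_Nil])

lemma concat_butlast_blocks: "s = concat (butlast (blocks n s)) @ last (blocks n s)"
  using concat_blocks[of n s] blocks_butlast_last[of n s] by (metis concat_append concat.simps append_Nil2)

lemma basic_last_blocks: "0 < n \<Longrightarrow> basic n (last (blocks n s))"
  using basic_blocks blocks_not_Nil last_in_set by blast

lemma alpha_conv: "0 < n \<Longrightarrow> alpha n s p =
    (if basic n (last (blocks n s) @ [(a, p)]) then butlast (blocks n s) else blocks n s)"
  using basic_last_blocks[of n s] unfolding alpha_def Let_def
  by (subst basic_snoc_iff) (auto simp: basic_def)

lemma greedy_split:
  "greedy n T \<Longrightarrow> prefix (t @ [x]) (concat T) \<Longrightarrow>
   \<exists>T1 b1 b2 T2. T = T1 @ [b1 @ [x] @ b2] @ T2 \<and> t = concat T1 @ b1"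
proof (induction T arbitrary: t)
  case Nil
  then show ?case by simp
next
  case (Cons y T)
  show ?case
  proof (cases "length t < length y")
    case True
    then have "prefix (t @ [x]) y"
      using prefix_length_prefix[OF Cons.prems(2), of y] by (simp add: prefixI)
    then obtain b2 where "y = t @ [x] @ b2" by (auto simp: prefix_def)
    then show ?thesis by (intro exI[of _ "[]"] exI[of _ t] exI[of _ b2] exI[of _ T]) simp
  next
    case False
    then have "prefix y (t @ [x])"
      using prefix_length_prefix[of y "concat (y # T)" "t @ [x]"] Cons.prems(2) by (simp add: prefixI)
    then have "prefix y t" using False by (auto simp: prefix_snoc)
    then obtain t' where t': "t = y @ t'" by (auto simp: prefix_def)
    then have "prefix (t' @ [x]) (concat T)" using Cons.prems(2) by simp
    moreover have "greedy n T" using Cons.prems(1) by (simp add: greedy_Cons)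
    ultimately obtain T1 b1 b2 T2 where "T = T1 @ [b1 @ [x] @ b2] @ T2 \<and> t' = concat T1 @ b1"
      using Cons.IH by blast
    then show ?thesis using t' by (intro exI[of _ "y # T1"] exI[of _ b1] exI[of _ b2] exI[of _ T2]) simp
  qed
qed

lemma alpha_within_block:
  assumes n: "0 < n" and g: "greedy n (T1 @ [b1 @ [(a, p)] @ b2] @ T2)"
  shows "alpha n (concat T1 @ b1) p = T1"
proof -
  let ?b = "b1 @ [(a, p)] @ b2"
  have gT1: "greedy n T1" and bb: "basic n ?b" and ch: "T1 \<noteq> [] \<longrightarrow> \<not> basic n (last T1 @ [hd ?b])"
    using g greedy_blockD[OF g, of ?b] by (auto simp: greedy_append)
  show ?thesis
  proof (cases "b1 = []")
    case False
    have bb1: "basic n (b1 @ [(a, p)])" using bb basic_prefix[of n ?b "b1 @ [(a, p)]"] by simp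
    then have "greedy n (T1 @ [b1])"
      using gT1 ch False basic_prefix[of n "b1 @ [(a, p)]" b1] by (auto simp: greedy_append)
    then have "blocks n (concat T1 @ b1) = T1 @ [b1]" using blocks_concat[OF n] by fastforce
    then show ?thesis using alpha_conv[OF n, of "concat T1 @ b1" p a] bb1 by simp
  next
    case True
    show ?thesis
    proof (cases "T1 = []")
      case True
      then show ?thesis using \<open>b1 = []\<close> n by (simp add: alpha_def blocks_Nil)
    next
      case False
      then show ?thesis using alpha_conv[OF n, of "concat T1" p a] blocks_concat[OF n gT1] ch \<open>b1 = []\<close>
        by simp
    qed
  qed
qed

lemma greedy_butlast_last_blocks:
  "0 < n \<Longrightarrow> s \<noteq> [] \<Longrightarrow> greedy n (butlast (blocks n s) @ [last (blocks n s)])"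
  using greedy_blocks by (subst (asm) blocks_butlast_last)

lemma blocks_snoc_basic:
  assumes n: "0 < n" and W: "W \<noteq> []" and b: "basic n (last (blocks n W) @ [y])"
  shows "blocks n (W @ [y]) = butlast (blocks n W) @ [last (blocks n W) @ [y]]"
proof -
  let ?T = "butlast (blocks n W)" and ?x = "last (blocks n W)"
  have "greedy n (?T @ [?x @ [y]])"
    using greedy_butlast_last_blocks[OF n W] last_blocks_not_Nil[OF n W] b by (simp add: greedy_append)
  then have "blocks n (concat (?T @ [?x @ [y]])) = ?T @ [?x @ [y]]" by (rule blocks_concat[OF n]) simp
  then show ?thesis using concat_butlast_blocks[of W n] by (simp flip: append_assoc)
qed

lemma approx_open_block:
  assumes n: "0 < n" and g: "greedy n (T @ [x])" and T: "T \<noteq> []"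
    and b: "basic n (x @ [(e, q)])" and p: "snd (hd x) = p"
  shows "approx n (concat T @ x @ [(e, q)]) (concat T @ [(e, p)])"
proof -
  have gT: "greedy n T" and x: "x \<noteq> []" and nb: "\<not> basic n (last T @ [hd x])"
    using g T by (auto simp: greedy_append)
  have bT: "blocks n (concat T) = T" using blocks_concat[OF n gT T] .
  have "alpha n (concat T @ x) q = T"
    using alpha_conv[OF n, of "concat T @ x" q e] blocks_concat[OF n g] b by simp
  moreover have "basic n (last T)" using greedy_blockD[OF gT] T by simp
  then have "\<not> basic n (last T @ [(e, p)])"
    using nb p basic_snoc_iff[of n "last T"] by (metis prod.collapse)
  then have "alpha n (concat T) p = T" using alpha_conv[OF n, of "concat T" p e] bT by simp
  ultimately show ?thesis unfolding approx_def by (simp flip: append_assoc)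
qed

lemma play_append: "play S hist pos (ms @ ms') = play S (hist @ ms) (play S hist pos ms) ms'"
  by (induction ms arbitrary: hist pos) auto

lemma run_Nil [simp]: "run S [] = (Map.empty, Map.empty)"
  by (simp add: run_def)

lemma run_snoc: "run S (ms @ [m]) = upd (S ms) (run S ms) m"
  unfolding run_def by (simp add: play_append)

lemma upd_Nil [simp]: "upd h pos [] = pos"
  by (simp add: upd_def)

lemma upd_Cons: "upd h pos ((p, a) # m) = upd h ((fst pos)(p \<mapsto> a), (snd pos)(p \<mapsto> h a)) m"
  by (cases pos) (simp add: upd_def)

lemma upd_notin:
  "p \<notin> fst ` set m \<Longrightarrow> fst (upd h pos m) p = fst pos p \<and> snd (upd h pos m) p = snd pos p"
  by (induction m arbitrary: pos) (auto simp: upd_def)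

lemma upd_in:
  "distinct (map fst m) \<Longrightarrow> (p, a) \<in> set m \<Longrightarrow>
   fst (upd h pos m) p = Some a \<and> snd (upd h pos m) p = Some (h a)"
proof (induction m arbitrary: pos)
  case (Cons x m)
  obtain q b where x: "x = (q, b)" by (cases x)
  show ?case
  proof (cases "q = p")
    case True
    then have "p \<notin> fst ` set m" "b = a" using Cons.prems x by (auto simp: image_iff)
    then show ?thesis
      using x True upd_notin[of p m h "((fst pos)(p \<mapsto> a), (snd pos)(p \<mapsto> h a))"]
      by (simp add: upd_Cons)
  next
    case False
    then show ?thesis using Cons x by (simp add: upd_Cons)
  qed
qed simp

lemma play_notin: "p \<notin> fst ` set (concat ms) \<Longrightarrow>
  fst (play S hist pos ms) p = fst pos p \<and> snd (play S hist pos ms) p = snd pos p"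
proof (induction ms arbitrary: hist pos)
  case (Cons m ms)
  then have "p \<notin> fst ` set m" "p \<notin> fst ` set (concat ms)" by auto
  then show ?case using Cons.IH[of "hist @ [m]" "upd (S hist) pos m"] upd_notin[of p m "S hist" pos]
    by simp
qed simp

lemma run_last_placed:
  assumes "distinct (map fst m)" "(p, a) \<in> set m" "p \<notin> fst ` set (concat ms')"
  shows "fst (run S (ms @ [m] @ ms')) p = Some a \<and> snd (run S (ms @ [m] @ ms')) p = Some (S ms a)"
proof -
  have "run S (ms @ [m] @ ms') = play S (ms @ [m]) (upd (S ms) (run S ms) m) ms'"
    using play_append[of S "[]" _ "ms @ [m]" ms'] by (simp add: run_def play_append)
  then show ?thesis
    using upd_in[OF assms(1,2), of "S ms" "run S ms"]
      play_notin[OF assms(3), of S "ms @ [m]" "upd (S ms) (run S ms) m"] by simp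
qed

section \<open>Live prefixes and the classes of H_{n,k}\<close>

definition live :: "('a \<times> nat) list \<Rightarrow> ('a \<times> nat) list \<Rightarrow> bool" where
  "live W s \<longleftrightarrow> s \<noteq> [] \<and> (\<exists>r. W = s @ r \<and> snd (last s) \<notin> snd ` set r)"

lemma live_self: "W \<noteq> [] \<Longrightarrow> live W W"
  by (auto simp: live_def)

lemma live_append: "live W s \<Longrightarrow> snd (last s) \<notin> snd ` set z \<Longrightarrow> live (W @ z) s"
  by (auto simp: live_def)

lemma live_appendD:
  assumes "live (W @ x) s" "snd (last s) \<notin> snd ` set x"
  shows "live W s"
proof -
  obtain r where r: "W @ x = s @ r" "snd (last s) \<notin> snd ` set r" and "s \<noteq> []"
    using assms(1) by (auto simp: live_def)
  have "prefix s W \<or> (\<exists>us. s = W @ us \<and> prefix us x \<and> us \<noteq> [])"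
    using r(1) prefix_append[of s W x] by (metis append_Nil2 prefixI)
  moreover have False if "s = W @ us" "prefix us x" "us \<noteq> []" for us
  proof -
    have "last s \<in> set x" using that set_mono_prefix[of us x] by auto
    then show False using assms(2) by force
  qed
  ultimately obtain r0 where "W = s @ r0" by (auto simp: prefix_def)
  then show ?thesis using r \<open>s \<noteq> []\<close> by (auto simp: live_def)
qed

lemma live_prefix: "live W s \<Longrightarrow> prefix s W"
  by (auto simp: live_def)

lemma live_in_T_univ: "set W \<subseteq> univ A \<times> {1..k} \<Longrightarrow> live W s \<Longrightarrow> s \<in> T_univ k A"
  by (auto simp: live_def T_univ_def)

lemma live_no_later_pebble:
  assumes "live W s" "prefix u W" "strict_prefix s u"
  shows "snd (last u) \<noteq> snd (last s)"
proof -
  obtain r where r: "W = s @ r" "snd (last s) \<notin> snd ` set r" using assms(1) by (auto simp: live_def)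
  obtain v where "u = s @ v" "v \<noteq> []" using assms(3) by (auto simp: strict_prefix_def prefix_def)
  moreover have "prefix v r" using assms(2) r(1) \<open>u = s @ v\<close> by simp
  ultimately have "last u \<in> set r" using set_mono_prefix[of v r] by auto
  then show ?thesis using r(2) by (metis image_eqI)
qed

lemma T_rel_if_live:
  assumes W: "set W \<subseteq> univ A \<times> {1..k}" and live: "\<forall>s\<in>set ss. live W s"
    and rel: "map eps ss \<in> rel A R"
  shows "ss \<in> T_rel k A R"
proof -
  have "set ss \<subseteq> T_univ k A" using W live live_in_T_univ by blast
  moreover have "prefix s t \<or> prefix t s" if "s \<in> set ss" "t \<in> set ss" for s t
    using live that live_prefix prefix_same_cases by metis
  moreover have "snd (last u) \<noteq> snd (last s)"
    if "s \<in> set ss" "t \<in> set ss" "prefix u t" "strict_prefix s u" for s t u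
  proof -
    have "prefix u W" using live that(2,3) live_prefix prefix_order.trans by metis
    then show ?thesis using live that(1,4) live_no_later_pebble by blast
  qed
  ultimately show ?thesis using rel unfolding T_rel_def by blast
qed

lemma live_if_T_rel:
  assumes "ss \<in> T_rel k A R" "s \<in> set ss" "W \<in> set ss" "prefix s W"
  shows "live W s"
proof -
  have nl: "\<forall>s\<in>set ss. \<forall>t\<in>set ss. prefix s t \<longrightarrow>
      (\<forall>u. prefix u t \<and> strict_prefix s u \<longrightarrow> snd (last u) \<noteq> snd (last s))"
    using assms(1) by (simp add: T_rel_def)
  obtain r where r: "W = s @ r" using assms(4) by (auto simp: prefix_def)
  have "s \<noteq> []" using assms(1,2) by (auto simp: T_rel_def T_univ_def)
  moreover have "snd (last s) \<notin> snd ` set r"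
  proof
    assume "snd (last s) \<in> snd ` set r"
    then obtain y where y: "y \<in> set r" "snd y = snd (last s)" by auto
    then obtain r1 r2 where "r = r1 @ y # r2" by (meson split_list)
    then have "prefix (s @ r1 @ [y]) W" "strict_prefix s (s @ r1 @ [y])"
      using r by (auto simp: strict_prefix_def)
    then show False using nl[rule_format, OF assms(2,3,4), of "s @ r1 @ [y]"] y(2) by simp
  qed
  ultimately show ?thesis using r by (auto simp: live_def)
qed

lemma T_rel_has_max:
  assumes "ss \<in> T_rel k A R" "ss \<noteq> []"
  obtains W where "W \<in> set ss" "\<forall>s\<in>set ss. prefix s W"
proof -
  have "Max (length ` set ss) \<in> length ` set ss" using assms(2) by simp
  then obtain W where W: "W \<in> set ss" "length W = Max (length ` set ss)" by (metis imageE)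
  have "prefix s W" if s: "s \<in> set ss" for s
  proof -
    have "length s \<le> length W" using s W by simp
    moreover have "prefix s W \<or> prefix W s" using assms(1) s W(1) by (simp add: T_rel_def)
    ultimately show ?thesis using prefix_length_prefix[of s s W] by blast
  qed
  then show ?thesis using that W(1) by blast
qed

definition cls :: "nat \<Rightarrow> nat \<Rightarrow> ('r,'a) struc \<Rightarrow> ('a \<times> nat) list \<Rightarrow> ('a \<times> nat) list set" where
  "cls n k A s = approx_rel n k A `` {s}"

lemma cls_in_H_univ: "s \<in> T_univ k A \<Longrightarrow> cls n k A s \<in> H_univ n k A"
  unfolding cls_def H_univ_def by (rule quotientI)

lemma H_univ_cls: "c \<in> H_univ n k A \<Longrightarrow> \<exists>s\<in>T_univ k A. c = cls n k A s"
  unfolding cls_def H_univ_def quotient_def by blast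

lemma mem_cls_iff: "t \<in> cls n k A s \<longleftrightarrow> s \<in> T_univ k A \<and> t \<in> T_univ k A \<and> approx n s t"
  by (simp add: cls_def approx_rel_def)

lemma mem_cls_self: "s \<in> T_univ k A \<Longrightarrow> s \<in> cls n k A s"
  by (simp add: mem_cls_iff approx_def)

lemma cls_eq: "s \<in> T_univ k A \<Longrightarrow> t \<in> T_univ k A \<Longrightarrow> approx n s t \<Longrightarrow> cls n k A s = cls n k A t"
  unfolding cls_def approx_rel_def approx_def by auto

lemma hom_T_rel:
  assumes hom: "is_hom (H_struc n k A) B f" and ss: "ss \<in> T_rel k A R"
  shows "map (f \<circ> cls n k A) ss \<in> rel B R"
proof -
  have sT: "set ss \<subseteq> T_univ k A" using ss by (simp add: T_rel_def)
  then have "set (map (cls n k A) ss) \<subseteq> H_univ n k A" using cls_in_H_univ[of _ k A n] by auto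
  moreover have "list_all2 (\<in>) ss (map (cls n k A) ss)"
    using sT mem_cls_self[of _ k A n] by (auto simp: list_all2_map2 list_all2_same)
  ultimately have "map (cls n k A) ss \<in> H_rel n k A R" using ss unfolding H_rel_def by blast
  then have "map f (map (cls n k A) ss) \<in> rel B R"
    using hom unfolding is_hom_def H_struc_def by (simp del: map_map)
  then show ?thesis by simp
qed

text \<open>The only use of the identity relation I: the pair [s, t] is I-related in T_k A.\<close>
lemma hom_cls_eq_if_live:
  assumes hom: "is_hom (H_struc n k A) B f" and IA: "I_struc I A" and IB: "I_struc I B"
    and t: "t \<in> T_univ k A" and live: "live t s" and elem: "fst (last s) = fst (last t)"
  shows "f (cls n k A s) = f (cls n k A t)"
proof -
  have W: "set t \<subseteq> univ A \<times> {1..k}" using t by (simp add: T_univ_def)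
  have "s \<in> T_univ k A" using live_in_T_univ[OF W live] .
  then have "last s \<in> univ A \<times> {1..k}" by (auto simp: T_univ_def)
  then have "fst (last s) \<in> univ A" by auto
  then have "map eps [s, t] \<in> rel A I" using IA elem by (simp add: I_struc_def eps_def)
  moreover have "\<forall>u\<in>set [s, t]. live t u" using live live_self t by (auto simp: T_univ_def)
  ultimately have "[s, t] \<in> T_rel k A I" using T_rel_if_live[OF W] by blast
  then have "[f (cls n k A s), f (cls n k A t)] \<in> rel B I" using hom_T_rel[OF hom] by fastforce
  then show ?thesis using IB by (auto simp: I_struc_def)
qed

section \<open>Winning strategies yield homomorphisms\<close>

definition strategy_answer :: "((nat \<times> 'a) list list \<Rightarrow> 'a \<Rightarrow> 'b) \<Rightarrow> nat \<Rightarrow> ('a \<times> nat) list \<Rightarrow> 'b" where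
  "strategy_answer S n s =
     S (map (map prod.swap) (alpha n (butlast s) (snd (last s)))) (fst (last s))"

lemma alpha_subset_blocks: "set (alpha n s p) \<subseteq> set (blocks n s)"
  unfolding alpha_def Let_def by (auto intro: in_set_butlastD)

lemma valid_move_block:
  assumes "0 < n" "set W \<subseteq> univ A \<times> {1..k}" "b \<in> set (blocks n W)"
  shows "valid_move n k A (map prod.swap b)"
proof -
  have "basic n b" using basic_blocks assms(1,3) .
  moreover have "set b \<subseteq> set (concat (blocks n W))" using assms(3) by auto
  ultimately show ?thesis using assms(2) by (auto simp: valid_move_def basic_def comp_def concat_blocks)
qed

lemma strategy_answer_approx: "approx n s t \<Longrightarrow> strategy_answer S n s = strategy_answer S n t"
  by (simp add: approx_def strategy_answer_def)

lemma strategy_answer_in_univ: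
  assumes ws: "winning_strategy n k A B S" and n: "0 < n" and s: "s \<in> T_univ k A"
  shows "strategy_answer S n s \<in> univ B"
proof -
  let ?ms = "map (map prod.swap) (alpha n (butlast s) (snd (last s)))"
  have W: "set (butlast s) \<subseteq> univ A \<times> {1..k}" and "last s \<in> univ A \<times> {1..k}"
    using s by (auto simp: T_univ_def dest: in_set_butlastD)
  have "\<forall>m\<in>set ?ms. valid_move n k A m"
  proof
    fix m assume "m \<in> set ?ms"
    then obtain b where "b \<in> set (alpha n (butlast s) (snd (last s)))" "m = map prod.swap b"
      by auto
    then show "valid_move n k A m" using alpha_subset_blocks valid_move_block[OF n W] by blast
  qed
  then have "dup_legal A B (run S ?ms) (S ?ms)" using ws by (simp add: winning_strategy_def)
  then show ?thesis using \<open>last s \<in> univ A \<times> {1..k}\<close>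
    by (auto simp: dup_legal_def strategy_answer_def)
qed

text \<open>Duplicator placed the last pebble of s after the blocks preceding its block, and by
  alpha_within_block these are exactly the blocks selected by alpha.\<close>
lemma run_blocks_live:
  fixes S :: "(nat \<times> 'a) list list \<Rightarrow> 'a \<Rightarrow> 'b"
  assumes n: "0 < n" and live: "live W s"
  defines "pos \<equiv> run S (map (map prod.swap) (blocks n W))"
  shows "fst pos (snd (last s)) = Some (fst (last s)) \<and>
         snd pos (snd (last s)) = Some (strategy_answer S n s)"
proof -
  obtain r where r: "W = s @ r" "snd (last s) \<notin> snd ` set r" and "s \<noteq> []"
    using live by (auto simp: live_def)
  then obtain t x where "s = t @ [x]" by (cases s rule: rev_cases) auto
  moreover obtain a p where "x = (a, p)" by fastforce
  ultimately have s: "s = t @ [(a, p)]" by simp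
  have "W \<noteq> []" using r(1) \<open>s \<noteq> []\<close> by simp
  then have g: "greedy n (blocks n W)" by (rule greedy_blocks[OF n])
  have "prefix (t @ [(a, p)]) (concat (blocks n W))" using r(1) s concat_blocks[of n W] by simp
  then obtain T1 b1 b2 T2 where T: "blocks n W = T1 @ [b1 @ [(a, p)] @ b2] @ T2" "t = concat T1 @ b1"
    using greedy_split[OF g] by blast
  let ?m = "map prod.swap (b1 @ [(a, p)] @ b2)"
  have "W = s @ b2 @ concat T2" using T concat_blocks[of n W] s by simp
  then have later: "p \<notin> fst ` set (concat (map (map prod.swap) T2))"
    using r s by (auto simp: image_iff)
  have "b1 @ [(a, p)] @ b2 \<in> set (blocks n W)" using T(1) by simp
  then have "basic n (b1 @ [(a, p)] @ b2)" using greedy_blockD[OF g] by blast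
  then have "distinct (map fst ?m)" by (simp add: basic_def comp_def)
  moreover have "(p, a) \<in> set ?m" by simp
  moreover have "map (map prod.swap) (blocks n W) = map (map prod.swap) T1 @ [?m] @ map (map prod.swap) T2"
    using T(1) by simp
  ultimately have "fst pos p = Some a \<and> snd pos p = Some (S (map (map prod.swap) T1) a)"
    unfolding pos_def using run_last_placed[OF _ _ later] by metis
  moreover have "alpha n t p = T1" using alpha_within_block[OF n] g T by simp
  ultimately show ?thesis using s by (simp add: strategy_answer_def)
qed

lemma strategy_answer_rel:
  assumes ws: "winning_strategy n k A B S" and n: "0 < n"
    and W: "set W \<subseteq> univ A \<times> {1..k}" and live: "\<forall>s\<in>set ss. live W s"
    and rel: "map eps ss \<in> rel A R"
  shows "map (strategy_answer S n) ss \<in> rel B R"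
proof -
  let ?ms = "map (map prod.swap) (blocks n W)"
  let ?pos = "run S ?ms"
  let ?idx = "map (\<lambda>s. snd (last s)) ss"
  have placed: "fst ?pos (snd (last s)) = Some (fst (last s))"
    "snd ?pos (snd (last s)) = Some (strategy_answer S n s)" if "s \<in> set ss" for s
    using run_blocks_live[OF n] live that by blast+
  have "\<forall>m\<in>set ?ms. valid_move n k A m" using valid_move_block[OF n W] by simp
  then have "\<not> spoiler_wins A B ?pos" using ws by (simp add: winning_strategy_def)
  moreover have "set ?idx \<subseteq> dom (fst ?pos) \<inter> dom (snd ?pos)"
    using placed by (auto simp only: set_map domIff)
  moreover have "map (the \<circ> fst ?pos) ?idx = map eps ss" using placed by (simp add: eps_def)
  ultimately have "map (the \<circ> snd ?pos) ?idx \<in> rel B R"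
    using rel unfolding spoiler_wins_def by metis
  moreover have "map (the \<circ> snd ?pos) ?idx = map (strategy_answer S n) ss" using placed by simp
  ultimately show ?thesis by metis
qed

lemma hom_of_winning_strategy:
  assumes ws: "winning_strategy n k A B S" and n: "0 < n"
  shows "is_hom (H_struc n k A) B (\<lambda>c. strategy_answer S n (SOME s. s \<in> c))"
proof -
  define f where "f c = strategy_answer S n (SOME s. s \<in> c)" for c
  have f_mem: "f c = strategy_answer S n t" if c: "c \<in> H_univ n k A" and t: "t \<in> c" for c t
  proof -
    obtain s where c_def: "c = cls n k A s" using H_univ_cls c by blast
    have "(SOME s. s \<in> c) \<in> c" using t by (rule someI)
    then have "approx n s (SOME s. s \<in> c)" "approx n s t" using t c_def mem_cls_iff by blast+
    then show ?thesis unfolding f_def using strategy_answer_approx[of n s] by metis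
  qed
  have "f c \<in> univ B" if c: "c \<in> H_univ n k A" for c
  proof -
    obtain s where "s \<in> T_univ k A" "c = cls n k A s" using H_univ_cls c by blast
    then show ?thesis using f_mem[OF c] mem_cls_self strategy_answer_in_univ[OF ws n] by metis
  qed
  moreover have "map f cs \<in> rel B R" if "cs \<in> H_rel n k A R" for cs R
  proof -
    obtain ss where ss: "ss \<in> T_rel k A R" "list_all2 (\<in>) ss cs" and cs: "set cs \<subseteq> H_univ n k A"
      using \<open>cs \<in> H_rel n k A R\<close> unfolding H_rel_def by blast
    have "map f cs = map (strategy_answer S n) ss"
      using ss(2) cs by (induction ss cs rule: list_all2_induct) (auto simp: f_mem)
    moreover have "map (strategy_answer S n) ss \<in> rel B R"
    proof (cases "ss = []")
      case True
      then show ?thesis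
        using ss(1) strategy_answer_rel[OF ws n, of "[]" ss] by (simp add: T_rel_def)
    next
      case False
      then obtain W where W: "W \<in> set ss" "\<forall>s\<in>set ss. prefix s W"
        using T_rel_has_max[OF ss(1) False] by blast
      then have "\<forall>s\<in>set ss. live W s" using live_if_T_rel[OF ss(1)] by blast
      moreover have "W \<in> T_univ k A" "map eps ss \<in> rel A R"
        using ss(1) W(1) unfolding T_rel_def by blast+
      then have "set W \<subseteq> univ A \<times> {1..k}" by (simp add: T_univ_def)
      ultimately show ?thesis using strategy_answer_rel[OF ws n] \<open>map eps ss \<in> rel A R\<close> by blast
    qed
    ultimately show ?thesis by simp
  qed
  ultimately show ?thesis unfolding f_def is_hom_def H_struc_def by simp
qed

section \<open>Homomorphisms yield winning strategies\<close>

definition explains :: "nat \<Rightarrow> nat \<Rightarrow> ('r,'a) struc \<Rightarrow> (('a \<times> nat) list set \<Rightarrow> 'b)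
    \<Rightarrow> ('a \<times> nat) list \<Rightarrow> ('a,'b) pos \<Rightarrow> bool" where
  "explains n k A f W pos \<longleftrightarrow> set W \<subseteq> univ A \<times> {1..k} \<and>
     (\<forall>i \<in> dom (fst pos). \<exists>s. live W s \<and> snd (last s) = i \<and>
        fst pos i = Some (fst (last s)) \<and> snd pos i = Some (f (cls n k A s)))"

lemma explains_not_spoiler_wins:
  assumes hom: "is_hom (H_struc n k A) B f" and ex: "explains n k A f W pos"
  shows "\<not> spoiler_wins A B pos"
proof
  assume "spoiler_wins A B pos"
  then obtain R idx where idx: "set idx \<subseteq> dom (fst pos) \<inter> dom (snd pos)"
    "map (the \<circ> fst pos) idx \<in> rel A R" "map (the \<circ> snd pos) idx \<notin> rel B R"
    unfolding spoiler_wins_def by blast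
  have "\<forall>i\<in>set idx. \<exists>s. live W s \<and> fst pos i = Some (fst (last s)) \<and> snd pos i = Some (f (cls n k A s))"
    using idx(1) ex unfolding explains_def by blast
  then obtain sf where sf: "\<And>i. i \<in> set idx \<Longrightarrow> live W (sf i)"
    "\<And>i. i \<in> set idx \<Longrightarrow> fst pos i = Some (fst (last (sf i)))"
    "\<And>i. i \<in> set idx \<Longrightarrow> snd pos i = Some (f (cls n k A (sf i)))"
    by metis
  define ss where "ss = map sf idx"
  have W: "set W \<subseteq> univ A \<times> {1..k}" using ex by (simp add: explains_def)
  have "\<forall>s\<in>set ss. live W s" using sf(1) unfolding ss_def by auto
  moreover have "map eps ss = map (the \<circ> fst pos) idx"
    using sf(2) unfolding ss_def eps_def by simp
  ultimately have "ss \<in> T_rel k A R" using T_rel_if_live[OF W] idx(2) by metis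
  then have "map (f \<circ> cls n k A) ss \<in> rel B R" by (rule hom_T_rel[OF hom])
  moreover have "map (f \<circ> cls n k A) ss = map (the \<circ> snd pos) idx"
    using sf(3) unfolding ss_def by simp
  ultimately show False using idx(3) by simp
qed

text \<open>Where pebble q lies after the history W. The fallback fst (hd W) is an arbitrary
  element of A, relevant only for pebbles that were never placed.\<close>
definition pebble_elem :: "('a \<times> nat) list \<Rightarrow> nat \<Rightarrow> 'a" where
  "pebble_elem W q =
     (if q \<in> snd ` set W then fst (last (filter (\<lambda>x. snd x = q) W)) else fst (hd W))"

lemma pebble_elem_live: "live W s \<Longrightarrow> pebble_elem W (snd (last s)) = fst (last s)"
proof -
  assume "live W s"
  then obtain r where r: "W = s @ r" "snd (last s) \<notin> snd ` set r" and "s \<noteq> []"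
    by (auto simp: live_def)
  then have W: "W = butlast s @ [last s] @ r" using r(1) by simp
  have "filter (\<lambda>x. snd x = snd (last s)) r = []" using r(2) by (auto simp: filter_empty_conv image_iff)
  then have "filter (\<lambda>x. snd x = snd (last s)) W = filter (\<lambda>x. snd x = snd (last s)) (butlast s) @ [last s]"
    using W by simp
  moreover have "snd (last s) \<in> snd ` set W" using W by auto
  ultimately show ?thesis by (simp add: pebble_elem_def)
qed

lemma pebble_elem_in_univ: "W \<noteq> [] \<Longrightarrow> set W \<subseteq> univ A \<times> X \<Longrightarrow> pebble_elem W q \<in> univ A"
proof (cases "q \<in> snd ` set W")
  case True
  assume W: "W \<noteq> []" "set W \<subseteq> univ A \<times> X"
  have "filter (\<lambda>x. snd x = q) W \<noteq> []" using True by (auto simp: filter_empty_conv)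
  then have "last (filter (\<lambda>x. snd x = q) W) \<in> univ A \<times> X"
    using W(2) by (meson filter_is_subset last_in_set subsetD)
  then show ?thesis using True by (auto simp: pebble_elem_def)
next
  case False
  assume W: "W \<noteq> []" "set W \<subseteq> univ A \<times> X"
  then have "hd W \<in> univ A \<times> X" by auto
  then show ?thesis using False by (auto simp: pebble_elem_def)
qed

definition sealed :: "nat \<Rightarrow> nat \<Rightarrow> ('a \<times> nat) list \<Rightarrow> bool" where
  "sealed n k W \<longleftrightarrow>
     W = [] \<or> length (last (blocks n W)) = n \<or> {1..k} \<subseteq> snd ` set (last (blocks n W))"

definition free_pebble :: "nat \<Rightarrow> nat \<Rightarrow> ('a \<times> nat) list \<Rightarrow> nat" where
  "free_pebble n k W = (LEAST q. q \<in> {1..k} \<and> q \<notin> snd ` set (last (blocks n W)))"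

definition seal_step :: "nat \<Rightarrow> nat \<Rightarrow> ('a \<times> nat) list \<Rightarrow> ('a \<times> nat) list" where
  "seal_step n k W = W @ [(pebble_elem W (free_pebble n k W), free_pebble n k W)]"

fun seal_iter :: "nat \<Rightarrow> nat \<Rightarrow> nat \<Rightarrow> ('a \<times> nat) list \<Rightarrow> ('a \<times> nat) list" where
  "seal_iter n k 0 W = W"
| "seal_iter n k (Suc j) W = (if sealed n k W then W else seal_iter n k j (seal_step n k W))"

definition seal :: "nat \<Rightarrow> nat \<Rightarrow> ('a \<times> nat) list \<Rightarrow> ('a \<times> nat) list" where
  "seal n k W = seal_iter n k n W"

lemma free_pebble:
  assumes "0 < n" "W \<noteq> []" "\<not> sealed n k W"
  defines "q \<equiv> free_pebble n k W"
  shows "q \<in> {1..k}" "q \<notin> snd ` set (last (blocks n W))" "basic n (last (blocks n W) @ [(a, q)])"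
proof -
  have ex: "\<exists>q. q \<in> {1..k} \<and> q \<notin> snd ` set (last (blocks n W))"
    and len: "length (last (blocks n W)) \<noteq> n" using assms(2,3) unfolding sealed_def by auto
  have "q \<in> {1..k} \<and> q \<notin> snd ` set (last (blocks n W))"
    unfolding q_def free_pebble_def by (rule LeastI_ex[OF ex])
  moreover have "length (last (blocks n W)) < n"
    using len basic_last_blocks[OF assms(1), of W] by (simp add: basic_def)
  ultimately show "q \<in> {1..k}" "q \<notin> snd ` set (last (blocks n W))"
    "basic n (last (blocks n W) @ [(a, q)])"
    by (simp_all add: basic_snoc_iff[OF basic_last_blocks[OF assms(1)]])
qed

text \<open>The appended pair re-places pebble q where it already lies, but as a placement of q it
  keeps s and W @ [last s] from being I-related. The detour is t = concat (butlast (blocks n W))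
  @ [(e, p)] with p the first pebble of the open last block: t has the class of W @ [last s],
  and p \<noteq> q makes t I-related to s.\<close>
lemma hom_cls_repebble:
  assumes hom: "is_hom (H_struc n k A) B f" and IA: "I_struc I A" and IB: "I_struc I B"
    and n: "0 < n" and W: "set W \<subseteq> univ A \<times> {1..k}" and live: "live W s"
    and free: "snd (last s) \<notin> snd ` set (last (blocks n W))"
    and b: "basic n (last (blocks n W) @ [last s])"
  shows "f (cls n k A s) = f (cls n k A (W @ [last s]))"
proof -
  obtain e q where eq: "last s = (e, q)" by fastforce
  let ?T = "butlast (blocks n W)" and ?x = "last (blocks n W)"
  have "W \<noteq> []" "s \<noteq> []" "last s \<in> set W" using live by (auto simp: live_def)
  have WTx: "W = concat ?T @ ?x" by (rule concat_butlast_blocks)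
  then have live_T: "live (concat ?T) s" using live free live_appendD by metis
  then have "?T \<noteq> []" by (auto simp: live_def)
  obtain a1 p where hx: "hd ?x = (a1, p)" by fastforce
  have "hd ?x \<in> set ?x" using last_blocks_not_Nil[OF n \<open>W \<noteq> []\<close>] by simp
  then have "p \<noteq> q" using free eq hx by (metis image_eqI snd_conv)
  have "set W = set (concat ?T) \<union> set ?x" using WTx by (metis set_append)
  then have "(a1, p) \<in> set W" using \<open>hd ?x \<in> set ?x\<close> hx by auto
  then have "p \<in> {1..k}" using W by auto
  define t where "t = concat ?T @ [(e, p)]"
  have "approx n (concat ?T @ ?x @ [(e, q)]) t"
    using approx_open_block[OF n greedy_butlast_last_blocks[OF n \<open>W \<noteq> []\<close>] \<open>?T \<noteq> []\<close>] b eq hx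
    unfolding t_def by simp
  then have "approx n (W @ [last s]) t" using eq by (subst WTx) simp
  moreover have "W @ [last s] \<in> T_univ k A" using W \<open>last s \<in> set W\<close> by (simp add: T_univ_def subsetD)
  moreover have "t \<in> T_univ k A"
    using W \<open>set W = _\<close> \<open>p \<in> {1..k}\<close> \<open>last s \<in> set W\<close> eq unfolding t_def T_univ_def by auto
  ultimately have "cls n k A (W @ [last s]) = cls n k A t" by (rule cls_eq[rotated 2])
  moreover have "live t s" using live_append[OF live_T] \<open>p \<noteq> q\<close> eq unfolding t_def by simp
  then have "f (cls n k A s) = f (cls n k A t)"
    using hom_cls_eq_if_live[OF hom IA IB \<open>t \<in> T_univ k A\<close>] eq unfolding t_def by simp
  ultimately show ?thesis by simp
qed

lemma explains_seal_step:
  assumes hom: "is_hom (H_struc n k A) B f" and IA: "I_struc I A" and IB: "I_struc I B"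
    and n: "0 < n" and W: "W \<noteq> []" "\<not> sealed n k W" and ex: "explains n k A f W pos"
  shows "explains n k A f (seal_step n k W) pos"
proof -
  let ?q = "free_pebble n k W"
  let ?e = "pebble_elem W ?q"
  note free = free_pebble[OF n W]
  have WA: "set W \<subseteq> univ A \<times> {1..k}" using ex by (simp add: explains_def)
  then have "?e \<in> univ A" using pebble_elem_in_univ W(1) by blast
  then have "set (seal_step n k W) \<subseteq> univ A \<times> {1..k}" using WA free(1) by (simp add: seal_step_def)
  moreover have "\<exists>s. live (seal_step n k W) s \<and> snd (last s) = i \<and>
      fst pos i = Some (fst (last s)) \<and> snd pos i = Some (f (cls n k A s))"
    if i: "i \<in> dom (fst pos)" for i
  proof -
    obtain s where s: "live W s" "snd (last s) = i" "fst pos i = Some (fst (last s))"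
      "snd pos i = Some (f (cls n k A s))" using ex i unfolding explains_def by blast
    show ?thesis
    proof (cases "i = ?q")
      case False
      then have "live (seal_step n k W) s" using live_append[OF s(1)] s(2) by (simp add: seal_step_def)
      then show ?thesis using s by blast
    next
      case True
      then have last_s: "last s = (?e, ?q)" using pebble_elem_live[OF s(1)] s(2) by (metis prod.collapse)
      then have "f (cls n k A s) = f (cls n k A (seal_step n k W))"
        using hom_cls_repebble[OF hom IA IB n WA s(1)] free(2,3) by (simp add: seal_step_def)
      moreover have "live (seal_step n k W) (seal_step n k W)" by (simp add: live_self seal_step_def)
      ultimately show ?thesis using s last_s True by (auto simp: seal_step_def)
    qed
  qed
  ultimately show ?thesis unfolding explains_def by blast
qed

lemma length_last_blocks_seal_step:
  "0 < n \<Longrightarrow> W \<noteq> [] \<Longrightarrow> \<not> sealed n k W \<Longrightarrow>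
   length (last (blocks n (seal_step n k W))) = Suc (length (last (blocks n W)))"
  unfolding seal_step_def by (subst blocks_snoc_basic) (simp_all add: free_pebble(3))

lemma sealed_seal_iter:
  "0 < n \<Longrightarrow> (W \<noteq> [] \<longrightarrow> n \<le> j + length (last (blocks n W))) \<Longrightarrow> sealed n k (seal_iter n k j W)"
proof (induction j arbitrary: W)
  case 0
  then show ?case using basic_last_blocks[of n W] by (auto simp: sealed_def basic_def)
next
  case (Suc j)
  then show ?case using length_last_blocks_seal_step[of n W k] by (auto simp: sealed_def seal_step_def)
qed

lemma sealed_seal: "0 < n \<Longrightarrow> sealed n k (seal n k W)"
  unfolding seal_def by (rule sealed_seal_iter) simp_all

lemma explains_seal_iter:
  assumes hom: "is_hom (H_struc n k A) B f" and IA: "I_struc I A" and IB: "I_struc I B"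
    and n: "0 < n"
  shows "explains n k A f W pos \<Longrightarrow> explains n k A f (seal_iter n k j W) pos"
proof (induction j arbitrary: W)
  case (Suc j)
  then show ?case using explains_seal_step[OF hom IA IB n] by (auto simp: sealed_def)
qed simp

lemma explains_seal:
  assumes "is_hom (H_struc n k A) B f" "I_struc I A" "I_struc I B" "0 < n"
    and "explains n k A f W pos"
  shows "explains n k A f (seal n k W) pos"
  unfolding seal_def using explains_seal_iter[OF assms] .

lemma alpha_after_sealed:
  assumes n: "0 < n" and C: "sealed n k C" and b: "basic n (x @ [(a, p)])"
    and p: "p \<in> {1..k}" and x: "snd ` set x \<subseteq> {1..k}"
  shows "alpha n (C @ x) p = (if C = [] then [] else blocks n C)"
proof (cases "C = []")
  case True
  have "blocks n x = (if x = [] then [[]] else [x])"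
    using blocks_Nil blocks_concat[OF n, of "[x]"] basic_prefix[OF b] by (auto simp: prefixI)
  then show ?thesis using True alpha_conv[OF n, of x p a] b n by (auto simp: alpha_def basic_def)
next
  case False
  let ?y = "last (blocks n C)"
  have full: "length ?y = n \<or> q \<in> snd ` set ?y" if "q \<in> {1..k}" for q
    using C False that unfolding sealed_def by blast
  show ?thesis
  proof (cases "x = []")
    case True
    then show ?thesis using False full[OF p] by (simp add: alpha_def Let_def)
  next
    case x_ne: False
    obtain a' p' where hx: "hd x = (a', p')" by fastforce
    then have "p' \<in> {1..k}" using x x_ne by (metis image_subset_iff list.set_sel(1) snd_conv)
    then have "\<not> basic n (?y @ [hd x])"
      using full basic_snoc_iff[OF basic_last_blocks[OF n, of C], of a' p'] hx by auto
    moreover have "greedy n (blocks n C)" using greedy_blocks[OF n False] .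
    moreover have "basic n x" using basic_prefix[OF b] by (simp add: prefixI)
    ultimately have "greedy n (blocks n C @ [x])" using x_ne blocks_not_Nil by (simp add: greedy_append)
    then have "blocks n (C @ x) = blocks n C @ [x]"
      using blocks_concat[OF n, of "blocks n C @ [x]"] by (simp add: concat_blocks)
    then show ?thesis using False alpha_conv[OF n, of "C @ x" p a] b by simp
  qed
qed

lemma cls_after_sealed:
  assumes n: "0 < n" and k: "1 \<le> k" and C: "sealed n k C" "set C \<subseteq> univ A \<times> {1..k}"
    and b: "basic n (x @ [(a, p)])" and x: "set (x @ [(a, p)]) \<subseteq> univ A \<times> {1..k}"
  shows "cls n k A (C @ x @ [(a, p)]) = cls n k A (C @ [(a, 1)])"
proof (rule cls_eq)
  have "p \<in> {1..k}" "snd ` set x \<subseteq> {1..k}" using x by auto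
  then have "alpha n (C @ x) p = alpha n (C @ []) 1"
    using alpha_after_sealed[OF n C(1) b] alpha_after_sealed[OF n C(1), of "[]" a 1] k n
    by (simp add: basic_def)
  then show "approx n (C @ x @ [(a, p)]) (C @ [(a, 1)])"
    by (simp add: approx_def flip: append_assoc)
qed (use C(2) x k in \<open>auto simp: T_univ_def\<close>)

lemma explains_move:
  assumes n: "0 < n" and k: "1 \<le> k" and C: "sealed n k C" and ex: "explains n k A f C pos"
    and m: "valid_move n k A m"
  defines "h \<equiv> \<lambda>a. f (cls n k A (C @ [(a, 1)]))"
  shows "explains n k A f (C @ map prod.swap m) (upd h pos m)"
proof -
  let ?x = "map prod.swap m"
  have CA: "set C \<subseteq> univ A \<times> {1..k}" using ex by (simp add: explains_def)
  have dm: "distinct (map fst m)" and "length m \<le> n" and mA: "set m \<subseteq> {1..k} \<times> univ A"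
    using m by (auto simp: valid_move_def)
  then have bx: "basic n ?x" by (simp add: basic_def comp_def)
  have xA: "set ?x \<subseteq> univ A \<times> {1..k}" using mA by auto
  have "\<exists>s. live (C @ ?x) s \<and> snd (last s) = i \<and>
      fst (upd h pos m) i = Some (fst (last s)) \<and> snd (upd h pos m) i = Some (f (cls n k A s))"
    if i: "i \<in> dom (fst (upd h pos m))" for i
  proof (cases "i \<in> fst ` set m")
    case True
    then obtain a where ia: "(i, a) \<in> set m" by force
    then obtain x1 x2 where x: "?x = x1 @ (a, i) # x2" by (metis in_set_conv_decomp pair_in_swap_image set_map)
    let ?s = "C @ x1 @ [(a, i)]"
    have "distinct (map snd ?x)" using dm by (simp add: comp_def)
    then have "i \<notin> snd ` set x2" using x by simp
    then have "live (C @ ?x) ?s" using live_append[OF live_self, of ?s x2] x by simp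
    moreover have "basic n (x1 @ [(a, i)])" using basic_prefix[OF bx] x by (simp add: prefixI)
    then have "cls n k A ?s = cls n k A (C @ [(a, 1)])"
      using cls_after_sealed[OF n k C CA] xA x by simp
    moreover have "fst (upd h pos m) i = Some a \<and> snd (upd h pos m) i = Some (h a)"
      using upd_in[OF dm ia] .
    ultimately show ?thesis unfolding h_def by auto
  next
    case False
    then have "fst (upd h pos m) i = fst pos i \<and> snd (upd h pos m) i = snd pos i"
      using upd_notin by metis
    then obtain s where s: "live C s" "snd (last s) = i" "fst (upd h pos m) i = Some (fst (last s))"
      "snd (upd h pos m) i = Some (f (cls n k A s))"
      using ex i unfolding explains_def by (auto simp: domIff)
    moreover have "i \<notin> snd ` set ?x" using False by (auto simp: image_iff)
    ultimately show ?thesis using live_append by metis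
  qed
  then show ?thesis unfolding explains_def using CA xA by auto
qed

definition history :: "nat \<Rightarrow> nat \<Rightarrow> (nat \<times> 'a) list list \<Rightarrow> ('a \<times> nat) list" where
  "history n k ms = fold (\<lambda>m W. seal n k W @ map prod.swap m) ms []"

definition hom_strategy :: "nat \<Rightarrow> nat \<Rightarrow> ('r,'a) struc \<Rightarrow> (('a \<times> nat) list set \<Rightarrow> 'b)
    \<Rightarrow> (nat \<times> 'a) list list \<Rightarrow> 'a \<Rightarrow> 'b" where
  "hom_strategy n k A f ms a = f (cls n k A (seal n k (history n k ms) @ [(a, 1)]))"

lemma explains_history:
  assumes hom: "is_hom (H_struc n k A) B f" and IA: "I_struc I A" and IB: "I_struc I B"
    and n: "0 < n" and k: "1 \<le> k"
  shows "\<forall>m\<in>set ms. valid_move n k A m \<Longrightarrow>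
    explains n k A f (history n k ms) (run (hom_strategy n k A f) ms)"
proof (induction ms rule: rev_induct)
  case Nil
  then show ?case by (simp add: history_def explains_def)
next
  case (snoc m ms)
  let ?C = "seal n k (history n k ms)"
  have "explains n k A f ?C (run (hom_strategy n k A f) ms)"
    using snoc explains_seal[OF hom IA IB n] by simp
  moreover have "valid_move n k A m" using snoc.prems by simp
  ultimately have "explains n k A f (?C @ map prod.swap m)
      (upd (\<lambda>a. f (cls n k A (?C @ [(a, 1)]))) (run (hom_strategy n k A f) ms) m)"
    by (rule explains_move[OF n k sealed_seal[OF n]])
  moreover have "hom_strategy n k A f ms = (\<lambda>a. f (cls n k A (?C @ [(a, 1)])))"
    by (simp add: hom_strategy_def[abs_def])
  moreover have "history n k (ms @ [m]) = ?C @ map prod.swap m" by (simp add: history_def)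
  ultimately show ?case by (simp only: run_snoc)
qed

lemma hom_strategy_legal:
  assumes hom: "is_hom (H_struc n k A) B f" and IA: "I_struc I A" and IB: "I_struc I B"
    and n: "0 < n" and k: "2 \<le> k" and ms: "\<forall>m\<in>set ms. valid_move n k A m"
  shows "dup_legal A B (run (hom_strategy n k A f) ms) (hom_strategy n k A f ms)"
proof -
  let ?pos = "run (hom_strategy n k A f) ms"
  let ?C = "seal n k (history n k ms)"
  have ex: "explains n k A f ?C ?pos"
    using explains_seal[OF hom IA IB n explains_history[OF hom IA IB n _ ms]] k by simp
  have CA: "set ?C \<subseteq> univ A \<times> {1..k}" using ex by (simp add: explains_def)
  have T1: "?C @ [(a, q)] \<in> T_univ k A" if "a \<in> univ A" "q \<in> {1..k}" for a q
    using CA that by (auto simp: T_univ_def)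
  have "hom_strategy n k A f ms a \<in> univ B" if "a \<in> univ A" for a
    using hom cls_in_H_univ[OF T1[OF that]] k unfolding hom_strategy_def is_hom_def H_struc_def by simp
  moreover have "Some (hom_strategy n k A f ms (the (fst ?pos i))) = snd ?pos i"
    if i: "i \<in> dom (fst ?pos)" for i
  proof -
    obtain s where s: "live ?C s" "snd (last s) = i" "fst ?pos i = Some (fst (last s))"
      "snd ?pos i = Some (f (cls n k A s))" using ex i unfolding explains_def by blast
    define a where "a = fst (last s)"
    \<comment> \<open>a second pebble is needed here; this is why k = 1 is treated separately\<close>
    define q where "q = (if i = 1 then 2 else (1::nat))"
    have "q \<in> {1..k}" "q \<noteq> i" using k by (auto simp: q_def)
    have "s \<in> T_univ k A" by (rule live_in_T_univ[OF CA s(1)])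
    then have "a \<in> univ A" unfolding a_def T_univ_def by (auto dest!: subsetD[OF _ last_in_set])
    then have t: "?C @ [(a, q)] \<in> T_univ k A" using T1 \<open>q \<in> {1..k}\<close> by blast
    have "live (?C @ [(a, q)]) s" using live_append[OF s(1)] s(2) \<open>q \<noteq> i\<close> by simp
    then have "f (cls n k A s) = f (cls n k A (?C @ [(a, q)]))"
      using hom_cls_eq_if_live[OF hom IA IB t] unfolding a_def by simp
    also have "\<dots> = hom_strategy n k A f ms a"
      using cls_after_sealed[OF n _ sealed_seal[OF n] CA, of "[]" a q] t k n
      by (simp add: hom_strategy_def T_univ_def basic_def)
    finally show ?thesis using s(3,4) unfolding a_def by simp
  qed
  ultimately show ?thesis by (auto simp: dup_legal_def)
qed

lemma hom_strategy_winning: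
  assumes hom: "is_hom (H_struc n k A) B f" and IA: "I_struc I A" and IB: "I_struc I B"
    and n: "0 < n" and k: "2 \<le> k"
  shows "winning_strategy n k A B (hom_strategy n k A f)"
  unfolding winning_strategy_def
proof (intro allI impI conjI)
  fix ms assume ms: "\<forall>m\<in>set ms. valid_move n k A m"
  then show "dup_legal A B (run (hom_strategy n k A f) ms) (hom_strategy n k A f ms)"
    by (rule hom_strategy_legal[OF assms])
  show "\<not> spoiler_wins A B (run (hom_strategy n k A f) ms)"
    using explains_not_spoiler_wins[OF hom explains_history[OF hom IA IB n _ ms]] k by simp
qed

lemma valid_move_single_pebble:
  assumes "valid_move n 1 A m"
  shows "m = [] \<or> (\<exists>a\<in>univ A. m = [(1, a)])"
proof -
  have d: "distinct (map fst m)" and sm: "set m \<subseteq> {1} \<times> univ A"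
    using assms by (auto simp: valid_move_def)
  have "set (map fst m) \<subseteq> {1}" using sm by auto
  then have "length m \<le> 1" using distinct_card[OF d] card_mono[of "{1}" "set (map fst m)"] by simp
  then show ?thesis using sm by (cases m) auto
qed

lemma explains_single_pebble:
  assumes "1 \<le> k" "a \<in> univ A" "dom (fst pos) \<subseteq> {1}"
    "fst pos 1 = Some a" "snd pos 1 = Some (f (cls n k A [(a, 1)]))"
  shows "explains n k A f [(a, 1)] pos"
  unfolding explains_def
proof (intro conjI ballI)
  fix i assume "i \<in> dom (fst pos)"
  then have "i = 1" using assms(3) by blast
  then show "\<exists>s. live [(a, 1)] s \<and> snd (last s) = i \<and> fst pos i = Some (fst (last s))
      \<and> snd pos i = Some (f (cls n k A s))"
    using assms(4,5) live_self[of "[(a, 1)]"] by auto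
qed (use assms(1,2) in simp)

lemma single_pebble_strategy_winning:
  assumes hom: "is_hom (H_struc n 1 A) B f"
  defines "S \<equiv> \<lambda>_ a. f (cls n 1 A [(a, 1)])"
  shows "winning_strategy n 1 A B S"
proof -
  define inv where "inv pos \<longleftrightarrow> dom (fst pos) \<subseteq> {1} \<and>
      (\<forall>a. fst pos 1 = Some a \<longrightarrow> a \<in> univ A \<and> snd pos 1 = Some (S [] a))" for pos :: "(_, _) pos"
  have run_inv: "inv (run S ms)" if "\<forall>m\<in>set ms. valid_move n 1 A m" for ms
    using that
  proof (induction ms rule: rev_induct)
    case (snoc m ms)
    then have "valid_move n 1 A m" by simp
    then have "m = [] \<or> (\<exists>a\<in>univ A. m = [(1, a)])" by (rule valid_move_single_pebble)
    then show ?case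
      using snoc by (auto simp: inv_def run_snoc upd_Cons S_def subset_iff domIff split: if_splits)
  qed (simp add: inv_def)
  show ?thesis
    unfolding winning_strategy_def
  proof (intro allI impI conjI)
    fix ms assume "\<forall>m\<in>set ms. valid_move n 1 A m"
    then have inv: "inv (run S ms)" by (rule run_inv)
    have "S ms a \<in> univ B" if "a \<in> univ A" for a
      using hom cls_in_H_univ[of "[(a, 1)]" 1 A n] that
      unfolding S_def is_hom_def H_struc_def by (simp add: T_univ_def)
    moreover have "Some (S ms (the (fst (run S ms) i))) = snd (run S ms) i"
      if "i \<in> dom (fst (run S ms))" for i
      using that inv unfolding inv_def S_def by auto
    ultimately show "dup_legal A B (run S ms) (S ms)" by (auto simp: dup_legal_def)
    show "\<not> spoiler_wins A B (run S ms)"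
    proof (cases "fst (run S ms) 1")
      case None
      then have "explains n 1 A f [] (run S ms)" using inv by (auto simp: inv_def explains_def)
      then show ?thesis using explains_not_spoiler_wins[OF hom] by blast
    next
      case (Some a)
      then have "explains n 1 A f [(a, 1)] (run S ms)"
        using inv explains_single_pebble[of 1 a A "run S ms" f n] by (simp add: inv_def S_def)
      then show ?thesis using explains_not_spoiler_wins[OF hom] by blast
    qed
  qed
qed

theorem lemma3p10:
  fixes ar :: "'r::finite \<Rightarrow> nat" and I :: 'r
    and A :: "('r,'a) struc" and B :: "('r,'b) struc" and n k :: nat
  assumes "ar I = 2"
    and "wf_struc ar A" and "wf_struc ar B"
    and "I_struc I A" and "I_struc I B"
    and "1 \<le> n" and "n \<le> k"
  shows "(\<exists>f. is_hom (H_struc n k A) B f) \<longleftrightarrow> duplicator_wins n k A B"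
proof
  assume "\<exists>f. is_hom (H_struc n k A) B f"
  then obtain f where hom: "is_hom (H_struc n k A) B f" by blast
  show "duplicator_wins n k A B"
  proof (cases "k = 1")
    case True
    then show ?thesis
      using single_pebble_strategy_winning hom unfolding duplicator_wins_def by blast
  next
    case False
    then have "2 \<le> k" using assms(6,7) by simp
    with hom show ?thesis
      using hom_strategy_winning assms(4-6) unfolding duplicator_wins_def by fastforce
  qed
next
  assume "duplicator_wins n k A B"
  then obtain S where "winning_strategy n k A B S" unfolding duplicator_wins_def by blast
  then show "\<exists>f. is_hom (H_struc n k A) B f" using hom_of_winning_strategy assms(6) by fastforce
qed

end
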